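(* Let $K, M, R, T \in \mathbb{N}$, put $D = KM$, and let ${\bf g} \in \mathbb{C}^D$ be a prototype filter with frequency-domain version ${\bf g}_f = \sqrt{D}\,{\bf W}_D {\bf g}$. Let ${\bf A} \in \mathbb{C}^{D\times D}$ be the GFDM matrix $$ {\bf A}=[{\bf g}_{0,0}\ \cdots\ {\bf g}_{K-1,0}\ \ {\bf g}_{0,1}\ \cdots\ {\bf g}_{K-1,1}\ \cdots\ {\bf g}_{K-1,M-1}], $$ where $[{\bf g}_{k,m}]_n=[{\bf g}]_{\langle n-mK\rangle_D}\,e^{j2\pi kn/K}$ for $n=0,\dots,D-1$, $k=0,\dots,K-1$, $m=0,\dots,M-1$. Here $\langle\cdot\rangle_D$ denotes reduction modulo $D$. Column $kM'$ ordering is as displayed: $k$ varies fastest. For $r=1,\dots,R$ and $t=1,\dots,T$, let ${\bf H}_{r,t}\in\mathbb{C}^{D\times D}$ be arbitrary circulant matrices. Define the $RD\times TD$ block matrix $$ \tilde{\bf H}=\begin{bmatrix}{\bf H}_{1,1}{\bf A} & \cdots & {\bf H}_{1,T}{\bf A}\\ \vdots & \ddots & \vdots\\ {\bf H}_{R,1}{\bf A} & \cdots & {\bf H}_{R,T}{\bf A}\end{bmatrix}. $$ Assume ${\bf g}_f$ has at most $M$ consecutive (cyclically) nonzero entries. Precisely, assume there exist ${\bf g}_1\in\mathbb{C}^M$ and an integer $l$ with $0\le l<D$ such that $$ {\bf g}_f = {\bf C}_D^{\,l}\begin{bmatrix}{\bf g}_1^T & {\bf 0}^T_{(K-1)M}\end{bmatrix}^T.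 $$ Then there exist matrices ${\bf F}_0,\dots,{\bf F}_{K-1}\in\mathbb{C}^{MR\times MT}$ such that $$ \tilde{\bf H}={\bf U}^H\,\mathrm{blkdiag}(\{{\bf F}_k\}_{k=0}^{K-1})\,{\bf P}, $$ where $$ {\bf U}=({\bf S}_{K,R}\otimes{\bf I}_M)({\bf I}_R\otimes {\bf C}_D^{-l}{\bf W}_D) $$ and $$ {\bf P}=({\bf S}_{K,T}\otimes{\bf I}_M)({\bf I}_T\otimes{\bf S}_{K,M}). $$
   Context: Matrix and vector entries are indexed from zero. ${\bf W}_p$ is the normalized $p$-point DFT matrix, with $[{\bf W}_p]_{m,n}=e^{-j2\pi mn/p}/\sqrt{p}$. ${\bf I}_p$ is the $p\times p$ identity matrix, and ${\bf 0}_q$ is the $q\times 1$ zero vector. $\otimes$ denotes the Kronecker product. $\mathrm{blkdiag}(\{{\bf F}_k\}_{k=0}^{K-1})$ is the block-diagonal matrix whose $k$th diagonal block is ${\bf F}_k$. For $A\in\mathbb{N}$, ${\bf C}_A$ is the $A\times A$ cyclic-shift permutation matrix $$ {\bf C}_A=\begin{bmatrix}{\bf 0}_{A-1}^T & 1\\ {\bf I}_{A-1} & {\bf 0}_{A-1}\end{bmatrix}. $$ The paper writes this matrix as ${\bf \Pi}_A$. For $A,B\in\mathbb{N}$, ${\bf S}_{A,B}$ is the $AB\times AB$ permutation matrix defined by $[{\bf S}_{A,B}]_{mB+p,\,qA+n}=\delta_{mn}\delta_{pq}$ for all $m,n\in\{0,\dots,A-1\}$ and $p,q\in\{0,\dots,B-1\}$,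 where $\delta$ is the Kronecker delta. The paper writes this matrix as ${\bf \Pi}_{AB}$; in the theorem it appears as ${\bf \Pi}_{KR}$, ${\bf \Pi}_{KT}$, ${\bf \Pi}_{KM}$, with $(A,B)=(K,R),(K,T),(K,M)$ respectively. Interpretation (not needed for the statement): ${\bf H}_{r,t}$ models the cyclic-prefix-equivalent channel from transmit antenna $t$ to receive antenna $r$ in a MIMO-GFDM system. *)

theory Defs
  imports Complex_Main "Jordan_Normal_Form.Matrix"
begin

text \<open>All matrices/vectors are indexed from zero.\<close>

definition herm :: "complex mat \<Rightarrow> complex mat" where
  "herm A = mat (dim_col A) (dim_row A) (\<lambda>(i,j). cnj (A $$ (j,i)))"

definition dft_mat :: "nat \<Rightarrow> complex mat" where
  "dft_mat p = mat p p (\<lambda>(m,n). exp (- 2 * pi * \<i> * of_nat (m*n) / of_nat p) / of_real (sqrt (real p)))"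

definition cyc_shift :: "nat \<Rightarrow> complex mat" where
  "cyc_shift A = mat A A (\<lambda>(i,j). if (i = 0 \<and> j = A - 1) \<or> (i \<ge> 1 \<and> j = i - 1) then 1 else 0)"

definition perm_S :: "nat \<Rightarrow> nat \<Rightarrow> complex mat" where
  "perm_S A B = mat (A*B) (A*B)
     (\<lambda>(i,j). if i div B = j mod A \<and> i mod B = j div A then 1 else 0)"

definition kron :: "complex mat \<Rightarrow> complex mat \<Rightarrow> complex mat" where
  "kron X Y = mat (dim_row X * dim_row Y) (dim_col X * dim_col Y)
     (\<lambda>(i,j). X $$ (i div dim_row Y, j div dim_col Y) * Y $$ (i mod dim_row Y, j mod dim_col Y))"

definition blkdiag :: "nat \<Rightarrow> nat \<Rightarrow> nat \<Rightarrow> (nat \<Rightarrow> complex mat) \<Rightarrow> complex mat" where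
  "blkdiag K a b F = mat (K*a) (K*b)
     (\<lambda>(i,j). if i div a = j div b then F (i div a) $$ (i mod a, j mod b) else 0)"

definition is_circulant :: "nat \<Rightarrow> complex mat \<Rightarrow> bool" where
  "is_circulant D H \<longleftrightarrow> H \<in> carrier_mat D D \<and>
     (\<exists>h :: nat \<Rightarrow> complex. \<forall>i<D. \<forall>j<D. H $$ (i,j) = h ((i + D - j) mod D))"

text \<open>GFDM matrix: column mK+k is g_{k,m}, [g_{k,m}]_n = g_{<n-mK>_D} e^{j 2 pi k n / K}.\<close>
definition gfdm_mat :: "nat \<Rightarrow> nat \<Rightarrow> complex vec \<Rightarrow> complex mat" where
  "gfdm_mat K M g = mat (K*M) (K*M)
     (\<lambda>(n,c). g $ (nat ((int n - int (c div K) * int K) mod int (K*M)))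
              * exp (2 * pi * \<i> * of_nat ((c mod K) * n) / of_nat K))"

definition block_channel :: "nat \<Rightarrow> nat \<Rightarrow> nat \<Rightarrow> (nat \<Rightarrow> nat \<Rightarrow> complex mat) \<Rightarrow> complex mat \<Rightarrow> complex mat" where
  "block_channel R T D H A = mat (R*D) (T*D)
     (\<lambda>(i,j). (H (i div D) (j div D) * A) $$ (i mod D, j mod D))"

end

(*
  Circulant channels are diagonalised by the DFT, W H = Lambda W, and column c of W A is,
  up to a phase, the frequency-domain prototype g_f cyclically shifted by (c mod K) M.
  Since g_f = C^l [g_1; 0] is supported on the M consecutive bins starting at l, entry (i, c)
  of C^-l W H A vanishes unless i div M = c mod K.  The permutations inside U and P sort the
  rows of all receive blocks by i div M and the columns of all transmit blocks by c mod K,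
  so X = U H P^T is block diagonal with K blocks.  As U is unitary and P is a permutation
  matrix, H = U^H X P.
*)
theory Submission
  imports Defs
begin

section \<open>Entrywise matrix calculus\<close>

lemma index_mult_mat_sum:
  "A \<in> carrier_mat nr n \<Longrightarrow> B \<in> carrier_mat n nc \<Longrightarrow> i < nr \<Longrightarrow> j < nc \<Longrightarrow>
   (A * B) $$ (i, j) = (\<Sum>k<n. A $$ (i, k) * B $$ (k, j))"
  by (auto simp: scalar_prod_def atLeast0LessThan intro!: sum.cong)

lemma index_mult_mat_vec_sum:
  "A \<in> carrier_mat nr n \<Longrightarrow> v \<in> carrier_vec n \<Longrightarrow> i < nr \<Longrightarrow>
   (A *\<^sub>v v) $ i = (\<Sum>j<n. A $$ (i, j) * v $ j)"
  by (auto simp: scalar_prod_def atLeast0LessThan intro!: sum.cong)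

lemma sum_delta_left: "(\<Sum>k<n. (if k = c then 1 else 0) * f k) = (f c :: 'a :: semiring_1)" if "c < (n :: nat)"
proof -
  have "(\<Sum>k<n. (if k = c then 1 else 0) * f k) = (\<Sum>k<n. if k = c then f k else 0)"
    by (rule sum.cong) simp_all
  then show ?thesis using that by simp
qed

lemma sum_delta_right: "(\<Sum>k<n. f k * (if k = c then 1 else 0)) = (f c :: 'a :: semiring_1)" if "c < (n :: nat)"
proof -
  have "(\<Sum>k<n. f k * (if k = c then 1 else 0)) = (\<Sum>k<n. if k = c then f k else 0)"
    by (rule sum.cong) simp_all
  then show ?thesis using that by simp
qed

lemma herm_index [simp]:
  "i < dim_col A \<Longrightarrow> j < dim_row A \<Longrightarrow> herm A $$ (i, j) = cnj (A $$ (j, i))"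
  "dim_row (herm A) = dim_col A" "dim_col (herm A) = dim_row A"
  by (auto simp: herm_def)

lemma herm_carrier [simp]: "A \<in> carrier_mat nr nc \<Longrightarrow> herm A \<in> carrier_mat nc nr"
  by (simp add: herm_def)

lemma herm_mult:
  assumes A: "A \<in> carrier_mat nr n" and B: "B \<in> carrier_mat n nc"
  shows "herm (A * B) = herm B * herm A"
proof (rule eq_matI)
  fix i j assume "i < dim_row (herm B * herm A)" "j < dim_col (herm B * herm A)"
  then have ij: "i < nc" "j < nr" using A B by auto
  have "herm (A * B) $$ (i, j) = cnj (\<Sum>k<n. A $$ (j, k) * B $$ (k, i))"
    using ij A B by (simp add: index_mult_mat_sum[OF A B ij(2,1), symmetric])
  also have "\<dots> = (\<Sum>k<n. herm B $$ (i, k) * herm A $$ (k, j))"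
    using ij A B by (simp add: mult.commute)
  also have "\<dots> = (herm B * herm A) $$ (i, j)"
    by (rule index_mult_mat_sum[symmetric]) (use A B ij in auto)
  finally show "herm (A * B) $$ (i, j) = (herm B * herm A) $$ (i, j)" .
qed (use A B in auto)

lemma unitary_mult:
  assumes "A \<in> carrier_mat n n" "B \<in> carrier_mat n n"
    and "herm A * A = 1\<^sub>m n" "herm B * B = 1\<^sub>m n"
  shows "herm (A * B) * (A * B) = 1\<^sub>m n"
proof -
  have "herm (A * B) * (A * B) = herm B * (herm A * (A * B))"
    using assms by (simp add: herm_mult assoc_mult_mat[of _ n n _ n _ n])
  also have "herm A * (A * B) = (herm A * A) * B"
    using assoc_mult_mat[OF herm_carrier[OF assms(1)] assms(1,2)] by simp
  finally show ?thesis using assms by simp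
qed

lemma unitary_sandwich:
  assumes U: "U \<in> carrier_mat m m" and P: "P \<in> carrier_mat n n" and X: "X \<in> carrier_mat m n"
    and "herm U * U = 1\<^sub>m m" and "transpose_mat P * P = 1\<^sub>m n"
  shows "herm U * (U * X * transpose_mat P) * P = X"
proof -
  have "herm U * (U * X * transpose_mat P) * P = (herm U * U) * X * (transpose_mat P * P)"
    using U P X by (simp add: assoc_mult_mat[of _ m m _ m _ n] assoc_mult_mat[of _ m m _ n _ n]
        assoc_mult_mat[of _ m n _ n _ n])
  then show ?thesis using assms X by simp
qed

section \<open>Roots of unity and the DFT\<close>

definition unit_root :: "nat \<Rightarrow> int \<Rightarrow> complex" where
  "unit_root D z = cis (- 2 * pi * of_int z / of_nat D)"

lemma unit_root_add: "unit_root D (a + b) = unit_root D a * unit_root D b"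
proof -
  have "- 2 * pi * of_int (a + b) / of_nat D
      = - 2 * pi * of_int a / of_nat D + - 2 * pi * of_int b / of_nat D"
    by (simp add: add_divide_distrib[symmetric] algebra_simps)
  then show ?thesis by (simp add: unit_root_def cis_mult)
qed

lemma unit_root_multiple: "D > 0 \<Longrightarrow> unit_root D (int D * q) = 1"
proof -
  assume "D > 0"
  then have "unit_root D (int D * q) = cis (2 * pi * of_int (- q))"
    unfolding unit_root_def by (simp add: algebra_simps)
  also have "\<dots> = 1" by (rule cis_multiple_2pi) simp
  finally show ?thesis .
qed

lemma unit_root_cong:
  assumes "D > 0" "a mod int D = b mod int D"
  shows "unit_root D a = unit_root D b"
proof -
  have "unit_root D a = unit_root D (a mod int D) * unit_root D (int D * (a div int D))"
    by (simp flip: unit_root_add)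
  also have "\<dots> = unit_root D (b mod int D) * unit_root D (int D * (b div int D))"
    using assms by (simp add: unit_root_multiple)
  also have "\<dots> = unit_root D b" by (simp flip: unit_root_add)
  finally show ?thesis .
qed

lemma unit_root_mult_nat_mod: "D > 0 \<Longrightarrow> unit_root D (a * int (b mod D)) = unit_root D (a * int b)"
  by (rule unit_root_cong) (simp_all add: of_nat_mod mod_mult_right_eq)

lemma unit_root_cnj: "cnj (unit_root D z) = unit_root D (- z)"
  by (simp add: unit_root_def cis_cnj)

lemma unit_root_power: "unit_root D (int k * z) = unit_root D z ^ k"
proof (induction k)
  case (Suc k)
  have "int (Suc k) * z = z + int k * z" by (simp add: algebra_simps)
  then show ?case using Suc by (simp only: unit_root_add) simp
qed (simp add: unit_root_def)

lemma unit_root_neq_one: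
  assumes "D > 0" "w \<noteq> 0" "\<bar>w\<bar> < int D"
  shows "unit_root D w \<noteq> 1"
proof
  assume "unit_root D w = 1"
  then have "cos (- 2 * pi * of_int w / of_nat D) = 1"
    by (simp add: unit_root_def complex_eq_iff)
  then obtain n :: int where n: "- 2 * pi * of_int w / of_nat D = of_int n * 2 * pi"
    by (subst (asm) cos_one_2pi_int) blast
  then have "pi * real_of_int (- w) = pi * real_of_int (n * int D)"
    using assms(1) by (simp add: field_simps)
  then have w: "- w = n * int D"
    using pi_gt_zero by (metis mult_cancel_left less_irrefl of_int_eq_iff)
  then have "\<bar>w\<bar> = \<bar>n\<bar> * int D" by (metis abs_minus_cancel abs_mult abs_of_nat)
  moreover have "\<bar>n\<bar> \<ge> 1" using w assms(2) by (cases "n = 0") auto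
  ultimately have "\<bar>w\<bar> \<ge> int D" using mult_right_mono[of 1 "\<bar>n\<bar>" "int D"] by simp
  with assms(3) show False by simp
qed

lemma dft_mat_carrier: "dft_mat D \<in> carrier_mat D D"
  by (simp add: dft_mat_def)

lemma dft_mat_dim [simp]: "dim_row (dft_mat D) = D" "dim_col (dft_mat D) = D"
  by (simp_all add: dft_mat_def)

lemma dft_mat_index:
  "i < D \<Longrightarrow> j < D \<Longrightarrow> dft_mat D $$ (i, j) = unit_root D (int i * int j) / of_real (sqrt (real D))"
  unfolding dft_mat_def unit_root_def by (simp add: cis_conv_exp algebra_simps)

lemma dft_mat_unitary:
  assumes D: "D > 0"
  shows "herm (dft_mat D) * dft_mat D = 1\<^sub>m D"
proof (rule eq_matI)
  fix i j assume "i < dim_row (1\<^sub>m D)" "j < dim_col (1\<^sub>m D)"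
  then have ij: "i < D" "j < D" by auto
  let ?s = "complex_of_real (sqrt (real D))" and ?w = "unit_root D (int j - int i)"
  have s2: "?s * ?s = of_nat D" by (simp flip: of_real_mult)
  have "(herm (dft_mat D) * dft_mat D) $$ (i, j)
      = (\<Sum>k<D. cnj (dft_mat D $$ (k, i)) * dft_mat D $$ (k, j))"
    by (subst index_mult_mat_sum[of _ D D _ D]) (use ij in \<open>simp_all add: dft_mat_carrier\<close>)
  also have "\<dots> = (\<Sum>k<D. ?w ^ k / (?s * ?s))"
  proof (intro sum.cong refl)
    fix k assume "k \<in> {..<D}"
    then have "cnj (dft_mat D $$ (k, i)) * dft_mat D $$ (k, j)
        = cnj (unit_root D (int k * int i)) * unit_root D (int k * int j) / (?s * ?s)"
      using ij by (simp add: dft_mat_index)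
    also have "cnj (unit_root D (int k * int i)) * unit_root D (int k * int j)
        = unit_root D (int k * (int j - int i))"
      by (simp add: unit_root_cnj unit_root_add[symmetric] algebra_simps)
    finally show "cnj (dft_mat D $$ (k, i)) * dft_mat D $$ (k, j) = ?w ^ k / (?s * ?s)"
      by (simp add: unit_root_power)
  qed
  also have "\<dots> = (\<Sum>k<D. ?w ^ k) / of_nat D"
    by (simp add: sum_divide_distrib s2)
  also have "\<dots> = 1\<^sub>m D $$ (i, j)"
  proof (cases "i = j")
    case True
    then show ?thesis using ij D by (simp add: unit_root_def)
  next
    case False
    have "?w \<noteq> 1" using False ij D by (intro unit_root_neq_one) auto
    moreover have "?w ^ D = 1"
      using unit_root_power[of D D "int j - int i"] unit_root_multiple[OF D] by simp
    ultimately have "(\<Sum>k<D. ?w ^ k) = 0" by (simp add: geometric_sum)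
    then show ?thesis using False ij by simp
  qed
  finally show "(herm (dft_mat D) * dft_mat D) $$ (i, j) = 1\<^sub>m D $$ (i, j)" .
qed (auto simp: dft_mat_def)

lemma sum_rotate_mod:
  assumes "(D :: nat) > 0"
  shows "(\<Sum>n<D. f n) = (\<Sum>s<D. f ((s + p) mod D))"
proof -
  have "inj_on (\<lambda>s. (s + p) mod D) {..<D}"
  proof (rule inj_onI)
    fix x y assume xy: "x \<in> {..<D}" "y \<in> {..<D}" and "(x + p) mod D = (y + p) mod D"
    then have "int ((x + p) mod D) = int ((y + p) mod D)" by simp
    then have "(int x + int p) mod int D = (int y + int p) mod int D"
      by (simp only: of_nat_mod of_nat_add)
    from mod_diff_cong[OF this, of "int p" "int p"] show "x = y" using xy by simp
  qed
  moreover have "(\<lambda>s. (s + p) mod D) ` {..<D} \<subseteq> {..<D}" using assms by auto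
  ultimately have "bij_betw (\<lambda>s. (s + p) mod D) {..<D} {..<D}"
    by (simp add: bij_betw_def endo_inj_surj)
  from sum.reindex_bij_betw[OF this, of f] show ?thesis by simp
qed

section \<open>Cyclic shifts and permutation matrices\<close>

lemma mod_add_eq_iff_mod_sub:
  "l < D \<Longrightarrow> x < D \<Longrightarrow> y < (D :: nat) \<Longrightarrow> y = (x + l) mod D \<longleftrightarrow> x = (y + D - l) mod D"
  by (auto simp: mod_if)

lemma cyc_shift_carrier: "cyc_shift D \<in> carrier_mat D D"
  by (simp add: cyc_shift_def)

lemma cyc_shift_power_carrier: "cyc_shift D ^\<^sub>m l \<in> carrier_mat D D"
  using cyc_shift_carrier by (rule pow_carrier_mat)

lemma cyc_shift_index:
  "x < D \<Longrightarrow> y < D \<Longrightarrow> cyc_shift D $$ (x, y) = (if x = (y + 1) mod D then 1 else 0)"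
  by (auto simp: cyc_shift_def mod_if)

lemma cyc_shift_power_index:
  "x < D \<Longrightarrow> y < D \<Longrightarrow> (cyc_shift D ^\<^sub>m l) $$ (x, y) = (if x = (y + l) mod D then 1 else 0)"
proof (induction l arbitrary: x y)
  case 0
  then show ?case by (simp add: cyc_shift_def)
next
  case (Suc l)
  have "(cyc_shift D ^\<^sub>m Suc l) $$ (x, y)
      = (\<Sum>k<D. (cyc_shift D ^\<^sub>m l) $$ (x, k) * (if k = (y + 1) mod D then 1 else 0))"
    using Suc.prems cyc_shift_power_carrier cyc_shift_carrier
    by (simp add: index_mult_mat_sum[of _ D D _ D] cyc_shift_index)
  also have "\<dots> = (cyc_shift D ^\<^sub>m l) $$ (x, (y + 1) mod D)"
    using Suc.prems by (intro sum_delta_right) simp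
  also have "\<dots> = (if x = (y + Suc l) mod D then 1 else 0)"
    using Suc.prems by (simp add: Suc.IH mod_add_left_eq)
  finally show ?case .
qed

lemma cyc_shift_power_mult_vec:
  assumes "l < D" "v \<in> carrier_vec D" "x < D"
  shows "((cyc_shift D ^\<^sub>m l) *\<^sub>v v) $ x = v $ ((x + D - l) mod D)"
proof -
  have "((cyc_shift D ^\<^sub>m l) *\<^sub>v v) $ x = (\<Sum>y<D. (if y = (x + D - l) mod D then 1 else 0) * v $ y)"
    using assms mod_add_eq_iff_mod_sub[OF assms(1) _ assms(3)]
    by (auto simp: index_mult_mat_vec_sum[OF cyc_shift_power_carrier] cyc_shift_power_index
        intro!: sum.cong)
  also have "\<dots> = v $ ((x + D - l) mod D)"
    using assms by (intro sum_delta_left) simp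
  finally show ?thesis .
qed

lemma mult_add_less_mult: "a < N \<Longrightarrow> r < M \<Longrightarrow> a * M + r < N * (M :: nat)"
proof -
  assume "a < N" "r < M"
  then have "a * M + r < (a + 1) * M" by simp
  also have "\<dots> \<le> N * M" using \<open>a < N\<close> by (intro mult_right_mono) auto
  finally show ?thesis .
qed

lemma eq_mult_add_iff_div_mod: "x = a * M + r \<longleftrightarrow> x div M = a \<and> x mod M = r" if "r < (M :: nat)"
proof
  assume "x = a * M + r"
  then show "x div M = a \<and> x mod M = r" using that by simp
next
  assume "x div M = a \<and> x mod M = r"
  then show "x = a * M + r" by (metis div_mult_mod_eq)
qed

locale perm_matrix =
  fixes Q :: "complex mat" and n :: nat and \<sigma> \<sigma>' :: "nat \<Rightarrow> nat"
  assumes carrier: "Q \<in> carrier_mat n n"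
    and range: "\<And>y. y < n \<Longrightarrow> \<sigma> y < n" "\<And>x. x < n \<Longrightarrow> \<sigma>' x < n"
    and index_col: "\<And>x y. x < n \<Longrightarrow> y < n \<Longrightarrow> Q $$ (x, y) = (if x = \<sigma> y then 1 else 0)"
    and index_row: "\<And>x y. x < n \<Longrightarrow> y < n \<Longrightarrow> Q $$ (x, y) = (if y = \<sigma>' x then 1 else 0)"
begin

lemma inverse_left: "y < n \<Longrightarrow> \<sigma>' (\<sigma> y) = y"
  using index_col[of "\<sigma> y" y] index_row[of "\<sigma> y" y] range(1)[of y] by (auto split: if_splits)

lemma inverse_right: "x < n \<Longrightarrow> \<sigma> (\<sigma>' x) = x"
  using index_col[of x "\<sigma>' x"] index_row[of x "\<sigma>' x"] range(2)[of x] by (auto split: if_splits)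

lemma eq_iff_inverse_eq: "x < n \<Longrightarrow> y < n \<Longrightarrow> x = \<sigma> y \<longleftrightarrow> \<sigma>' x = y"
  using inverse_left inverse_right by auto

lemma mult_index:
  assumes "Y \<in> carrier_mat n m" "i < n" "j < m"
  shows "(Q * Y) $$ (i, j) = Y $$ (\<sigma>' i, j)"
proof -
  have "(Q * Y) $$ (i, j) = (\<Sum>k<n. (if k = \<sigma>' i then 1 else 0) * Y $$ (k, j))"
    using assms by (auto simp: index_mult_mat_sum[OF carrier] index_row intro!: sum.cong)
  then show ?thesis using assms range(2) by (simp add: sum_delta_left)
qed

lemma mult_transpose_index:
  assumes "Y \<in> carrier_mat m n" "i < m" "j < n"
  shows "(Y * transpose_mat Q) $$ (i, j) = Y $$ (i, \<sigma>' j)"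
proof -
  have "(Y * transpose_mat Q) $$ (i, j) = (\<Sum>k<n. Y $$ (i, k) * (if k = \<sigma>' j then 1 else 0))"
    using assms carrier
    by (subst index_mult_mat_sum[of _ m n _ n]) (auto simp: index_row intro!: sum.cong)
  then show ?thesis using assms range(2) by (simp add: sum_delta_right)
qed

lemma transpose_mult_self: "transpose_mat Q * Q = 1\<^sub>m n"
proof (rule eq_matI)
  fix i j assume "i < dim_row (1\<^sub>m n)" "j < dim_col (1\<^sub>m n)"
  then have ij: "i < n" "j < n" by auto
  have "(transpose_mat Q * Q) $$ (i, j) = (\<Sum>k<n. (if k = \<sigma> i then 1 else 0) * Q $$ (k, j))"
    using ij carrier
    by (subst index_mult_mat_sum[of _ n n _ n]) (auto simp: index_col intro!: sum.cong)
  also have "\<dots> = Q $$ (\<sigma> i, j)" using ij range(1) by (simp add: sum_delta_left)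
  also have "\<dots> = 1\<^sub>m n $$ (i, j)" using ij range(1) by (auto simp: index_row inverse_left)
  finally show "(transpose_mat Q * Q) $$ (i, j) = 1\<^sub>m n $$ (i, j)" .
qed (use carrier in auto)

lemma herm_eq_transpose: "herm Q = transpose_mat Q"
  using carrier by (auto simp: herm_def index_col intro!: eq_matI)

lemma herm_mult_self: "herm Q * Q = 1\<^sub>m n"
  by (simp add: herm_eq_transpose transpose_mult_self)

end

lemma perm_matrix_mult:
  assumes Q: "perm_matrix Q n \<sigma> \<sigma>'" and Q': "perm_matrix Q' n \<tau> \<tau>'"
  shows "perm_matrix (Q * Q') n (\<sigma> \<circ> \<tau>) (\<tau>' \<circ> \<sigma>')"
proof -
  interpret Q: perm_matrix Q n \<sigma> \<sigma>' by (rule Q)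
  interpret Q': perm_matrix Q' n \<tau> \<tau>' by (rule Q')
  have index: "(Q * Q') $$ (x, y) = Q' $$ (\<sigma>' x, y)" if "x < n" "y < n" for x y
    using that by (rule Q.mult_index[OF Q'.carrier])
  show ?thesis
  proof
    fix x y assume xy: "x < n" "y < n"
    show "(Q * Q') $$ (x, y) = (if x = (\<sigma> \<circ> \<tau>) y then 1 else 0)"
      using xy Q.range Q'.range by (simp add: index Q'.index_col Q.eq_iff_inverse_eq)
    show "(Q * Q') $$ (x, y) = (if y = (\<tau>' \<circ> \<sigma>') x then 1 else 0)"
      using xy Q.range by (simp add: index Q'.index_row)
  qed (use Q.carrier Q'.carrier Q.range Q'.range in auto)
qed

lemma perm_matrix_transpose:
  assumes "perm_matrix Q n \<sigma> \<sigma>'"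
  shows "perm_matrix (transpose_mat Q) n \<sigma>' \<sigma>"
proof -
  interpret perm_matrix Q n \<sigma> \<sigma>' by (rule assms)
  show ?thesis
  proof
    fix x y assume "x < n" "y < n"
    then show "transpose_mat Q $$ (x, y) = (if x = \<sigma>' y then 1 else 0)"
      and "transpose_mat Q $$ (x, y) = (if y = \<sigma> x then 1 else 0)"
      using carrier by (simp add: index_row, simp add: index_col)
  qed (use carrier range in auto)
qed

lemma perm_matrix_sandwich_index:
  assumes Q: "perm_matrix Q n \<sigma> \<sigma>'" and Q': "perm_matrix Q' m \<tau> \<tau>'"
    and X: "X \<in> carrier_mat n m" and i: "i < n" and j: "j < m"
  shows "(Q * X * transpose_mat Q') $$ (i, j) = X $$ (\<sigma>' i, \<tau>' j)"
proof -
  interpret Q: perm_matrix Q n \<sigma> \<sigma>' by (rule Q)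
  interpret Q': perm_matrix Q' m \<tau> \<tau>' by (rule Q')
  have "Q * X * transpose_mat Q' = Q * (X * transpose_mat Q')"
    using Q.carrier X Q'.carrier by (simp add: assoc_mult_mat[of _ n n _ m _ m])
  then have "(Q * X * transpose_mat Q') $$ (i, j) = (X * transpose_mat Q') $$ (\<sigma>' i, j)"
    using X Q'.carrier i j by (simp only:) (rule Q.mult_index, auto)
  also have "\<dots> = X $$ (\<sigma>' i, \<tau>' j)"
    using X Q.range(2)[OF i] j by (rule Q'.mult_transpose_index)
  finally show ?thesis .
qed

lemma perm_matrix_kron_one_right:
  assumes Q: "perm_matrix Q n \<sigma> \<sigma>'" and M: "M > 0" and N: "N = n * M"
  shows "perm_matrix (kron Q (1\<^sub>m M)) N
           (\<lambda>y. \<sigma> (y div M) * M + y mod M) (\<lambda>x. \<sigma>' (x div M) * M + x mod M)"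
proof -
  interpret perm_matrix Q n \<sigma> \<sigma>' by (rule Q)
  have div_less: "z div M < n" if "z < n * M" for z
    using that M by (simp add: div_less_iff_less_mult)
  show ?thesis
    unfolding N
  proof
    show "kron Q (1\<^sub>m M) \<in> carrier_mat (n * M) (n * M)"
      using carrier by (simp add: kron_def)
  next
    fix y assume "y < n * M"
    then show "\<sigma> (y div M) * M + y mod M < n * M" "\<sigma>' (y div M) * M + y mod M < n * M"
      using M div_less range by (auto intro: mult_add_less_mult)
  next
    fix x y assume xy: "x < n * M" "y < n * M"
    then have kron: "kron Q (1\<^sub>m M) $$ (x, y) = Q $$ (x div M, y div M) * 1\<^sub>m M $$ (x mod M, y mod M)"
      using carrier by (simp add: kron_def)
    show "kron Q (1\<^sub>m M) $$ (x, y) = (if x = \<sigma> (y div M) * M + y mod M then 1 else 0)"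
      unfolding kron using xy M div_less by (simp add: index_col eq_mult_add_iff_div_mod)
    show "kron Q (1\<^sub>m M) $$ (x, y) = (if y = \<sigma>' (x div M) * M + x mod M then 1 else 0)"
      unfolding kron using xy M div_less by (auto simp: index_row eq_mult_add_iff_div_mod)
  qed
qed

lemma perm_matrix_kron_one_left:
  assumes Q: "perm_matrix Q n \<sigma> \<sigma>'" and N: "N = T * n"
  shows "perm_matrix (kron (1\<^sub>m T) Q) N
           (\<lambda>y. y div n * n + \<sigma> (y mod n)) (\<lambda>x. x div n * n + \<sigma>' (x mod n))"
proof -
  interpret perm_matrix Q n \<sigma> \<sigma>' by (rule Q)
  have bounds: "z div n < T" "z mod n < n" if "z < T * n" for z
  proof -
    have "n > 0" using that by (cases n) auto
    then show "z div n < T" "z mod n < n" using that by (simp_all add: div_less_iff_less_mult)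
  qed
  show ?thesis
    unfolding N
  proof
    show "kron (1\<^sub>m T) Q \<in> carrier_mat (T * n) (T * n)"
      using carrier by (simp add: kron_def)
  next
    fix y assume "y < T * n"
    then show "y div n * n + \<sigma> (y mod n) < T * n" "y div n * n + \<sigma>' (y mod n) < T * n"
      using bounds range by (auto intro: mult_add_less_mult)
  next
    fix x y assume xy: "x < T * n" "y < T * n"
    then have kron: "kron (1\<^sub>m T) Q $$ (x, y) = 1\<^sub>m T $$ (x div n, y div n) * Q $$ (x mod n, y mod n)"
      using carrier by (simp add: kron_def)
    show "kron (1\<^sub>m T) Q $$ (x, y) = (if x = y div n * n + \<sigma> (y mod n) then 1 else 0)"
      unfolding kron using xy bounds range by (auto simp: index_col eq_mult_add_iff_div_mod)
    show "kron (1\<^sub>m T) Q $$ (x, y) = (if y = x div n * n + \<sigma>' (x mod n) then 1 else 0)"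
      unfolding kron using xy bounds range by (auto simp: index_row eq_mult_add_iff_div_mod)
  qed
qed

(* Column q A + n of perm_S A B carries its one in row n B + q. *)
definition stride_perm :: "nat \<Rightarrow> nat \<Rightarrow> nat \<Rightarrow> nat" where
  "stride_perm A B b = b mod A * B + b div A"

lemma stride_perm_less: "A > 0 \<Longrightarrow> b < A * B \<Longrightarrow> stride_perm A B b < A * B"
proof -
  assume "A > 0" "b < A * B"
  then have "b div A < B" by (simp add: div_less_iff_less_mult mult.commute)
  with \<open>A > 0\<close> show ?thesis by (simp add: stride_perm_def mult_add_less_mult)
qed

lemma perm_matrix_perm_S:
  assumes "A > 0" "B > 0"
  shows "perm_matrix (perm_S A B) (A * B) (stride_perm A B) (stride_perm B A)"
proof
  fix x y assume xy: "x < A * B" "y < A * B"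
  then have "y div A < B" "x div B < A"
    using assms by (auto simp: div_less_iff_less_mult mult.commute)
  then show "perm_S A B $$ (x, y) = (if x = stride_perm A B y then 1 else 0)"
    "perm_S A B $$ (x, y) = (if y = stride_perm B A x then 1 else 0)"
    using xy by (auto simp: perm_S_def stride_perm_def eq_mult_add_iff_div_mod)
qed (use assms stride_perm_less[of A _ B] stride_perm_less[of B _ A] in
      \<open>auto simp: perm_S_def mult.commute\<close>)

lemma perm_matrix_gfdm_row_perm:
  assumes "K > 0" "R > 0" "M > 0"
  shows "perm_matrix (kron (perm_S K R) (1\<^sub>m M)) (R * (K * M))
           (\<lambda>y. stride_perm K R (y div M) * M + y mod M) (\<lambda>x. stride_perm R K (x div M) * M + x mod M)"
  by (rule perm_matrix_kron_one_right[OF perm_matrix_perm_S]) (use assms in simp_all)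

lemma perm_matrix_gfdm_col_perm:
  assumes "K > 0" "T > 0" "M > 0"
  shows "perm_matrix (kron (perm_S K T) (1\<^sub>m M) * kron (1\<^sub>m T) (perm_S K M)) (T * (K * M))
           ((\<lambda>y. stride_perm K T (y div M) * M + y mod M)
              \<circ> (\<lambda>y. y div (K * M) * (K * M) + stride_perm K M (y mod (K * M))))
           ((\<lambda>x. x div (K * M) * (K * M) + stride_perm M K (x mod (K * M)))
              \<circ> (\<lambda>x. stride_perm T K (x div M) * M + x mod M))"
  using assms
  by (intro perm_matrix_mult perm_matrix_kron_one_right[OF perm_matrix_perm_S]
      perm_matrix_kron_one_left[OF perm_matrix_perm_S]) simp_all

lemma perm_matrix_cyc_shift_power:
  assumes "l < D"
  shows "perm_matrix (cyc_shift D ^\<^sub>m l) D (\<lambda>y. (y + l) mod D) (\<lambda>x. (x + D - l) mod D)"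
  by standard (use assms in \<open>auto simp: cyc_shift_power_carrier cyc_shift_power_index
      mod_add_eq_iff_mod_sub\<close>)

lemma rotated_dft_unitary:
  assumes "l < D"
  shows "herm (transpose_mat (cyc_shift D ^\<^sub>m l) * dft_mat D) * (transpose_mat (cyc_shift D ^\<^sub>m l) * dft_mat D)
       = 1\<^sub>m D"
  using perm_matrix.herm_mult_self[OF perm_matrix_transpose[OF perm_matrix_cyc_shift_power[OF assms]]]
    dft_mat_unitary[of D] assms
  by (intro unitary_mult) (simp_all add: cyc_shift_power_carrier dft_mat_carrier)

section \<open>Repeating a block along the diagonal\<close>

lemma sum_single_block:
  fixes f :: "nat \<Rightarrow> 'a :: comm_monoid_add"
  assumes r: "r < R" and zero: "\<And>p. p < R * D \<Longrightarrow> p div D \<noteq> r \<Longrightarrow> f p = 0"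
  shows "(\<Sum>p<R * D. f p) = (\<Sum>s<D. f (r * D + s))"
proof -
  have "(\<Sum>p<R * D. f p) = (\<Sum>m<R. sum f {m * D..<m * D + D})"
    by (rule sum.nat_group[symmetric])
  also have "\<dots> = (\<Sum>m<R. if m = r then sum f {r * D..<r * D + D} else 0)"
  proof (rule sum.cong[OF refl])
    fix m assume m: "m \<in> {..<R}"
    have "sum f {m * D..<m * D + D} = 0" if "m \<noteq> r"
    proof (rule sum.neutral, intro ballI)
      fix p assume p: "p \<in> {m * D..<m * D + D}"
      then have "p div D = m" by (auto intro: div_nat_eqI simp: algebra_simps)
      moreover have "p < R * D"
        using p m mult_add_less_mult[of m R "p - m * D" D] by auto
      ultimately show "f p = 0" using zero that by auto
    qed
    then show "sum f {m * D..<m * D + D} = (if m = r then sum f {r * D..<r * D + D} else 0)"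
      by simp
  qed
  also have "\<dots> = (\<Sum>s<D. f (r * D + s))"
    using r by (simp add: sum.atLeastLessThan_shift_0 atLeast0LessThan comp_def)
  finally show ?thesis .
qed

lemma block_offset:
  assumes "a < R * D" "s < (D :: nat)"
  shows "a div D * D + s < R * D" "(a div D * D + s) div D = a div D" "(a div D * D + s) mod D = s"
  using assms by (auto simp: mult_add_less_mult div_less_iff_less_mult)

lemma kron_one_index:
  assumes "V \<in> carrier_mat D D" "a < R * D" "p < R * D"
  shows "kron (1\<^sub>m R) V $$ (a, p) = (if a div D = p div D then V $$ (a mod D, p mod D) else 0)"
proof -
  have "D > 0" using assms(2) by (cases D) auto
  then have "a div D < R" "p div D < R" using assms by (auto simp: div_less_iff_less_mult)
  then show ?thesis using assms by (auto simp: kron_def)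
qed

lemma kron_one_mult_index:
  assumes V: "V \<in> carrier_mat D D" and X: "X \<in> carrier_mat (R * D) m"
    and a: "a < R * D" and b: "b < m"
  shows "(kron (1\<^sub>m R) V * X) $$ (a, b) = (\<Sum>s<D. V $$ (a mod D, s) * X $$ (a div D * D + s, b))"
proof -
  have D: "D > 0" using a by (cases D) auto
  have "(kron (1\<^sub>m R) V * X) $$ (a, b) = (\<Sum>p<R * D. kron (1\<^sub>m R) V $$ (a, p) * X $$ (p, b))"
    using V X a b by (subst index_mult_mat_sum[of _ "R * D" "R * D" _ m]) (simp_all add: kron_def)
  also have "\<dots> = (\<Sum>s<D. kron (1\<^sub>m R) V $$ (a, a div D * D + s) * X $$ (a div D * D + s, b))"
    using a D by (intro sum_single_block) (auto simp: kron_one_index[OF V] div_less_iff_less_mult)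
  also have "\<dots> = (\<Sum>s<D. V $$ (a mod D, s) * X $$ (a div D * D + s, b))"
    using a by (intro sum.cong) (auto simp: kron_one_index[OF V] block_offset)
  finally show ?thesis .
qed

lemma kron_one_mult_kron_one:
  assumes V: "V \<in> carrier_mat D D" and W: "W \<in> carrier_mat D D"
  shows "kron (1\<^sub>m R) V * kron (1\<^sub>m R) W = kron (1\<^sub>m R) (V * W)"
proof (rule eq_matI)
  fix a b assume "a < dim_row (kron (1\<^sub>m R) (V * W))" "b < dim_col (kron (1\<^sub>m R) (V * W))"
  then have ab: "a < R * D" "b < R * D" using V W by (auto simp: kron_def)
  have "(kron (1\<^sub>m R) V * kron (1\<^sub>m R) W) $$ (a, b)
      = (\<Sum>s<D. V $$ (a mod D, s) * kron (1\<^sub>m R) W $$ (a div D * D + s, b))"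
    by (rule kron_one_mult_index[OF V]) (use W ab in \<open>auto simp: kron_def\<close>)
  also have "\<dots> = (\<Sum>s<D. V $$ (a mod D, s) * (if a div D = b div D then W $$ (s, b mod D) else 0))"
    using ab by (intro sum.cong refl) (simp add: kron_one_index[OF W] block_offset)
  also have "\<dots> = kron (1\<^sub>m R) (V * W) $$ (a, b)"
  proof -
    have "D > 0" using ab by (cases D) auto
    then show ?thesis
      using ab V W
      by (simp add: kron_one_index[OF mult_carrier_mat[OF V W]] index_mult_mat_sum[OF V W]
          del: index_mult_mat)
  qed
  finally show "(kron (1\<^sub>m R) V * kron (1\<^sub>m R) W) $$ (a, b) = kron (1\<^sub>m R) (V * W) $$ (a, b)" .
qed (use V W in \<open>auto simp: kron_def\<close>)

lemma kron_one_one: "kron (1\<^sub>m R) (1\<^sub>m D) = 1\<^sub>m (R * D)"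
proof (rule eq_matI)
  fix a b assume "a < dim_row (1\<^sub>m (R * D))" "b < dim_col (1\<^sub>m (R * D))"
  then have ab: "a < R * D" "b < R * D" by auto
  then have "D > 0" by (cases D) auto
  moreover have "kron (1\<^sub>m R) (1\<^sub>m D) $$ (a, b)
      = (if a div D = b div D then 1\<^sub>m D $$ (a mod D, b mod D) else 0)"
    using ab by (intro kron_one_index) auto
  ultimately show "kron (1\<^sub>m R) (1\<^sub>m D) $$ (a, b) = 1\<^sub>m (R * D) $$ (a, b)"
    using ab by (auto simp: mod_less_divisor) (metis div_mult_mod_eq)
qed (auto simp: kron_def)

lemma herm_kron_one:
  assumes V: "V \<in> carrier_mat D D"
  shows "herm (kron (1\<^sub>m R) V) = kron (1\<^sub>m R) (herm V)"
proof (rule eq_matI)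
  fix a b assume "a < dim_row (kron (1\<^sub>m R) (herm V))" "b < dim_col (kron (1\<^sub>m R) (herm V))"
  then have ab: "a < R * D" "b < R * D" using V by (auto simp: kron_def)
  then have "D > 0" by (cases D) auto
  moreover have "herm (kron (1\<^sub>m R) V) $$ (a, b) = cnj (kron (1\<^sub>m R) V $$ (b, a))"
    using ab V by (simp add: kron_def)
  ultimately show "herm (kron (1\<^sub>m R) V) $$ (a, b) = kron (1\<^sub>m R) (herm V) $$ (a, b)"
    using ab V by (simp add: kron_one_index[OF V] kron_one_index[OF herm_carrier[OF V]])
qed (use V in \<open>auto simp: kron_def\<close>)

lemma kron_one_unitary:
  assumes V: "V \<in> carrier_mat D D" and "herm V * V = 1\<^sub>m D"
  shows "herm (kron (1\<^sub>m R) V) * kron (1\<^sub>m R) V = 1\<^sub>m (R * D)"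
  using assms kron_one_mult_kron_one[of "herm V" D V R] by (simp add: herm_kron_one kron_one_one)

lemma kron_one_mult_block_channel:
  assumes V: "V \<in> carrier_mat D D" and A: "A \<in> carrier_mat D D"
    and H: "\<And>r t. r < R \<Longrightarrow> t < T \<Longrightarrow> H r t \<in> carrier_mat D D"
    and a: "a < R * D" and b: "b < T * D"
  shows "(kron (1\<^sub>m R) V * block_channel R T D H A) $$ (a, b)
       = (V * (H (a div D) (b div D) * A)) $$ (a mod D, b mod D)"
proof -
  have D: "D > 0" using a by (cases D) auto
  have "a div D < R" "b div D < T" using a b D by (auto simp: div_less_iff_less_mult)
  then have HA: "H (a div D) (b div D) * A \<in> carrier_mat D D" using H A by (metis mult_carrier_mat)
  have "(kron (1\<^sub>m R) V * block_channel R T D H A) $$ (a, b)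
      = (\<Sum>s<D. V $$ (a mod D, s) * block_channel R T D H A $$ (a div D * D + s, b))"
    by (rule kron_one_mult_index[OF V]) (use a b in \<open>auto simp: block_channel_def\<close>)
  also have "\<dots> = (\<Sum>s<D. V $$ (a mod D, s) * (H (a div D) (b div D) * A) $$ (s, b mod D))"
    using a b by (intro sum.cong refl) (simp add: block_channel_def block_offset)
  also have "\<dots> = (V * (H (a div D) (b div D) * A)) $$ (a mod D, b mod D)"
    using V HA D by (simp add: index_mult_mat_sum[of _ D D _ D])
  finally show ?thesis .
qed

section \<open>The channel in the frequency domain\<close>

lemma dft_mat_mult_circulant:
  assumes D: "D > 0" and H: "is_circulant D H"
  obtains \<Lambda> where "\<And>q p. q < D \<Longrightarrow> p < D \<Longrightarrow> (dft_mat D * H) $$ (q, p) = \<Lambda> q * dft_mat D $$ (q, p)"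
proof -
  obtain h where Hc: "H \<in> carrier_mat D D"
    and h: "\<And>i j. i < D \<Longrightarrow> j < D \<Longrightarrow> H $$ (i, j) = h ((i + D - j) mod D)"
    using H unfolding is_circulant_def by blast
  let ?r = "complex_of_real (sqrt (real D))"
  have "(dft_mat D * H) $$ (q, p) = (\<Sum>t<D. unit_root D (int q * int t) * h t) * dft_mat D $$ (q, p)"
    if qp: "q < D" "p < D" for q p
  proof -
    define f where "f n = unit_root D (int q * int n) / ?r * h ((n + D - p) mod D)" for n
    have "(dft_mat D * H) $$ (q, p) = (\<Sum>n<D. f n)"
      using qp by (subst index_mult_mat_sum[OF dft_mat_carrier Hc])
        (auto simp: f_def dft_mat_index h intro!: sum.cong)
    also have "\<dots> = (\<Sum>t<D. f ((t + p) mod D))"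
      by (rule sum_rotate_mod[OF D])
    also have "\<dots> = (\<Sum>t<D. unit_root D (int q * int p) / ?r * (unit_root D (int q * int t) * h t))"
    proof (rule sum.cong[OF refl])
      fix t assume "t \<in> {..<D}"
      then have "((t + p) mod D + D - p) mod D = t"
        using mod_add_eq_iff_mod_sub[of p D t "(t + p) mod D"] qp D by simp
      moreover have "unit_root D (int q * int ((t + p) mod D))
          = unit_root D (int q * int p) * unit_root D (int q * int t)"
        using D by (simp add: unit_root_mult_nat_mod distrib_left unit_root_add)
      ultimately show "f ((t + p) mod D)
          = unit_root D (int q * int p) / ?r * (unit_root D (int q * int t) * h t)"
        by (simp add: f_def)
    qed
    also have "\<dots> = (\<Sum>t<D. unit_root D (int q * int t) * h t) * dft_mat D $$ (q, p)"
      using qp by (simp add: dft_mat_index sum_distrib_left sum_distrib_right sum_divide_distrib mult_ac)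
    finally show ?thesis .
  qed
  then show thesis by (rule that)
qed

lemma dft_mat_mult_circulant_mult:
  assumes D: "D > 0" and H: "is_circulant D H" and Y: "Y \<in> carrier_mat D m"
  obtains \<Lambda> where
    "\<And>q c. q < D \<Longrightarrow> c < m \<Longrightarrow> ((dft_mat D * H) * Y) $$ (q, c) = \<Lambda> q * (dft_mat D * Y) $$ (q, c)"
proof -
  obtain \<Lambda> where \<Lambda>: "\<And>q p. q < D \<Longrightarrow> p < D \<Longrightarrow> (dft_mat D * H) $$ (q, p) = \<Lambda> q * dft_mat D $$ (q, p)"
    using dft_mat_mult_circulant[OF D H] by blast
  have Hc: "H \<in> carrier_mat D D" using H by (simp add: is_circulant_def)
  have "((dft_mat D * H) * Y) $$ (q, c) = \<Lambda> q * (dft_mat D * Y) $$ (q, c)" if qc: "q < D" "c < m" for q c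
  proof -
    have "((dft_mat D * H) * Y) $$ (q, c) = (\<Sum>p<D. (dft_mat D * H) $$ (q, p) * Y $$ (p, c))"
      using qc by (intro index_mult_mat_sum[OF mult_carrier_mat[OF dft_mat_carrier Hc] Y])
    also have "\<dots> = \<Lambda> q * (\<Sum>p<D. dft_mat D $$ (q, p) * Y $$ (p, c))"
      using qc by (simp add: \<Lambda> sum_distrib_left mult.assoc)
    also have "\<dots> = \<Lambda> q * (dft_mat D * Y) $$ (q, c)"
      using qc by (simp add: index_mult_mat_sum[OF dft_mat_carrier Y] del: index_mult_mat)
    finally show ?thesis .
  qed
  then show thesis by (rule that)
qed

lemma gfdm_mat_carrier: "gfdm_mat K M g \<in> carrier_mat (K * M) (K * M)"
  by (simp add: gfdm_mat_def)

lemma gfdm_mat_col: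
  assumes "K > 0" "M > 0" "c < K * M"
  shows "col (gfdm_mat K M g) c = vec (K * M) (\<lambda>n. g $ nat ((int n - int (c div K * K)) mod int (K * M))
           * unit_root (K * M) (- (int (c mod K * M) * int n)))"
proof -
  have "exp (2 * pi * \<i> * of_nat (c mod K * n) / of_nat K) = unit_root (K * M) (- (int (c mod K * M) * int n))"
    for n
  proof -
    have "- 2 * pi * real_of_int (- (int (c mod K * M) * int n)) / real (K * M)
        = 2 * pi * real (c mod K * n) / real K"
      using assms by (simp add: field_simps)
    then have "unit_root (K * M) (- (int (c mod K * M) * int n)) = cis (2 * pi * real (c mod K * n) / real K)"
      unfolding unit_root_def by simp
    also have "\<dots> = exp (2 * pi * \<i> * of_nat (c mod K * n) / of_nat K)"
      by (simp add: cis_conv_exp algebra_simps)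
    finally show ?thesis by simp
  qed
  then show ?thesis using assms by (auto simp: gfdm_mat_def intro!: eq_vecI)
qed

lemma dft_mat_mult_shift_modulation:
  assumes D: "D > 0" and x: "x \<in> carrier_vec D" and q: "q < D"
  shows "(dft_mat D *\<^sub>v vec D (\<lambda>n. x $ nat ((int n - int s) mod int D) * unit_root D (- (f * int n)))) $ q
       = unit_root D ((int q - f) * int s) * (dft_mat D *\<^sub>v x) $ nat ((int q - f) mod int D)"
proof -
  let ?r = "complex_of_real (sqrt (real D))" and ?a = "int q - f"
  define y where "y n = unit_root D (int q * int n) / ?r
      * (x $ nat ((int n - int s) mod int D) * unit_root D (- (f * int n)))" for n
  have "(dft_mat D *\<^sub>v vec D (\<lambda>n. x $ nat ((int n - int s) mod int D) * unit_root D (- (f * int n)))) $ q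
      = (\<Sum>n<D. y n)"
    using q by (subst index_mult_mat_vec_sum[OF dft_mat_carrier])
      (auto simp: y_def dft_mat_index intro!: sum.cong)
  also have "\<dots> = (\<Sum>t<D. y ((t + s) mod D))"
    by (rule sum_rotate_mod[OF D])
  also have "\<dots> = (\<Sum>t<D. unit_root D (?a * int s) * (unit_root D (?a * int t) / ?r * x $ t))"
  proof (rule sum.cong[OF refl])
    fix t assume "t \<in> {..<D}"
    then have t: "t < D" by simp
    have idx: "nat ((int ((t + s) mod D) - int s) mod int D) = t"
      using t by (simp add: of_nat_mod mod_diff_left_eq)
    have "unit_root D (int q * int ((t + s) mod D)) * unit_root D (- (f * int ((t + s) mod D)))
        = unit_root D (?a * int ((t + s) mod D))"
      by (simp add: unit_root_add[symmetric] algebra_simps)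
    also have "\<dots> = unit_root D (?a * int (t + s))"
      by (rule unit_root_mult_nat_mod[OF D])
    also have "\<dots> = unit_root D (?a * int s) * unit_root D (?a * int t)"
      by (simp add: unit_root_add[symmetric] algebra_simps)
    finally show "y ((t + s) mod D) = unit_root D (?a * int s) * (unit_root D (?a * int t) / ?r * x $ t)"
      unfolding y_def idx by (simp only: divide_inverse mult_ac)
  qed
  also have "\<dots> = unit_root D (?a * int s) * (\<Sum>t<D. unit_root D (?a * int t) / ?r * x $ t)"
    by (simp only: sum_distrib_left)
  also have "(\<Sum>t<D. unit_root D (?a * int t) / ?r * x $ t) = (dft_mat D *\<^sub>v x) $ nat (?a mod int D)"
  proof -
    have "unit_root D (int (nat (?a mod int D)) * int t) = unit_root D (?a * int t)" for t
      using D by (intro unit_root_cong) (simp_all add: mod_mult_left_eq)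
    then show ?thesis
      using D x by (subst index_mult_mat_vec_sum[OF dft_mat_carrier])
        (auto simp: dft_mat_index nat_less_iff intro!: sum.cong)
  qed
  finally show ?thesis .
qed

lemma dft_mat_mult_gfdm_index:
  assumes K: "K > 0" and M: "M > 0" and g: "g \<in> carrier_vec (K * M)"
    and q: "q < K * M" and c: "c < K * M"
  shows "(dft_mat (K * M) * gfdm_mat K M g) $$ (q, c)
       = unit_root (K * M) ((int q - int (c mod K * M)) * int (c div K * K))
         * (dft_mat (K * M) *\<^sub>v g) $ nat ((int q - int (c mod K * M)) mod int (K * M))"
proof -
  have "(dft_mat (K * M) * gfdm_mat K M g) $$ (q, c) = (dft_mat (K * M) *\<^sub>v col (gfdm_mat K M g) c) $ q"
    using q c gfdm_mat_carrier[of K M g] by simp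
  then show ?thesis
    using dft_mat_mult_shift_modulation[OF _ g q, of "c div K * K" "int (c mod K * M)"] K M c
    by (simp add: gfdm_mat_col)
qed

lemma dft_prototype_eq_0:
  assumes l: "l < D" and g1: "g1 \<in> carrier_vec M" and dim: "M + N = D"
    and hyp: "of_real (sqrt (real D)) \<cdot>\<^sub>v (dft_mat D *\<^sub>v g) = (cyc_shift D ^\<^sub>m l) *\<^sub>v (g1 @\<^sub>v 0\<^sub>v N)"
    and x: "x < D" and outside: "M \<le> (x + D - l) mod D"
  shows "(dft_mat D *\<^sub>v g) $ x = 0"
proof -
  let ?v = "g1 @\<^sub>v 0\<^sub>v N"
  have v: "?v \<in> carrier_vec D" using g1 dim by (metis append_carrier_vec zero_carrier_vec)
  have "of_real (sqrt (real D)) * (dft_mat D *\<^sub>v g) $ x = ((cyc_shift D ^\<^sub>m l) *\<^sub>v ?v) $ x"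
    using arg_cong[OF hyp, of "\<lambda>w. w $ x"] x by simp
  also have "\<dots> = ?v $ ((x + D - l) mod D)"
    by (rule cyc_shift_power_mult_vec[OF l v x])
  also have "\<dots> = 0"
  proof -
    have "(x + D - l) mod D < M + N" using x dim by simp
    then show ?thesis using outside g1 by (simp add: index_append_vec)
  qed
  finally show ?thesis using x by simp
qed

lemma mod_diff_ge_if_div_neq:
  assumes M: "M > 0" and i: "i < K * M" and k: "k < K" and ne: "i div M \<noteq> k"
  shows "int M \<le> (int i - int (k * M)) mod int (K * M)"
proof (rule ccontr)
  define d where "d = (int i - int (k * M)) mod int (K * M)"
  assume "\<not> int M \<le> d"
  moreover have "K * M > 0" using i by (cases "K * M") auto
  ultimately have d: "0 \<le> d" "d < int M" by (simp_all add: d_def)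
  then have lt: "k * M + nat d < K * M" using k mult_add_less_mult[of k K "nat d" M] by linarith
  \<comment> \<open>\<open>k M + d\<close> and \<open>i\<close> are congruent modulo \<open>K M\<close> and both lie in \<open>[0, K M)\<close>\<close>
  have "int (k * M + nat d) mod int (K * M) = int i mod int (K * M)"
    using d by (simp add: d_def mod_add_right_eq)
  then have "(k * M + nat d) mod (K * M) = i mod (K * M)"
    by (simp only: of_nat_mod[symmetric] of_nat_eq_iff)
  then have "i = k * M + nat d" using lt i by simp
  then have "i div M = k" using d M by simp
  with ne show False ..
qed

lemma mod_rotate_back:
  assumes "l < D"
  shows "int ((nat (((int i + int l) mod int D - k) mod int D) + D - l) mod D) = (int i - k) mod int D"
proof -
  define x where "x = nat (((int i + int l) mod int D - k) mod int D)"
  have "int ((x + D - l) mod D) = ((int x - int l) + int D) mod int D"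
    using assms by (simp add: of_nat_mod of_nat_diff algebra_simps)
  also have "\<dots> = (((int i + int l) mod int D - k) mod int D - int l) mod int D"
    using assms by (simp add: x_def)
  also have "\<dots> = ((int i + int l) mod int D - (k + int l)) mod int D"
    by (simp add: mod_diff_left_eq diff_diff_eq)
  also have "\<dots> = (int i + int l - (k + int l)) mod int D"
    by (simp only: mod_diff_left_eq)
  finally show ?thesis by (simp add: x_def)
qed

lemma rotated_dft_channel_gfdm_eq_0:
  assumes K: "K > 0" and M: "M > 0" and g: "g \<in> carrier_vec (K * M)" and g1: "g1 \<in> carrier_vec M"
    and l: "l < K * M" and H: "is_circulant (K * M) H"
    and hyp: "of_real (sqrt (real (K * M))) \<cdot>\<^sub>v (dft_mat (K * M) *\<^sub>v g)
           = (cyc_shift (K * M) ^\<^sub>m l) *\<^sub>v (g1 @\<^sub>v 0\<^sub>v ((K - 1) * M))"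
    and i: "i < K * M" and c: "c < K * M" and ne: "i div M \<noteq> c mod K"
  shows "((transpose_mat (cyc_shift (K * M) ^\<^sub>m l) * dft_mat (K * M)) * (H * gfdm_mat K M g)) $$ (i, c) = 0"
proof -
  define D where "D = K * M"
  define q where "q = (i + l) mod D"
  define x where "x = nat ((int q - int (c mod K * M)) mod int D)"
  have D: "D > 0" and q: "q < D" and x: "x < D"
    using K M by (simp_all add: D_def q_def x_def nat_less_iff)
  have cD: "c < D" using c by (simp add: D_def)
  have Hc: "H \<in> carrier_mat D D" using H by (simp add: is_circulant_def D_def)
  have A: "gfdm_mat K M g \<in> carrier_mat D D" by (simp add: gfdm_mat_carrier D_def)
  interpret C: perm_matrix "transpose_mat (cyc_shift D ^\<^sub>m l)" D "\<lambda>x. (x + D - l) mod D" "\<lambda>y. (y + l) mod D"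
    using perm_matrix_transpose[OF perm_matrix_cyc_shift_power] l by (simp add: D_def)
  obtain \<Lambda> where \<Lambda>: "\<And>q c. q < D \<Longrightarrow> c < D \<Longrightarrow>
      ((dft_mat D * H) * gfdm_mat K M g) $$ (q, c) = \<Lambda> q * (dft_mat D * gfdm_mat K M g) $$ (q, c)"
    using dft_mat_mult_circulant_mult[OF D _ A] H by (auto simp: D_def)
  have "(transpose_mat (cyc_shift D ^\<^sub>m l) * dft_mat D) * (H * gfdm_mat K M g)
      = transpose_mat (cyc_shift D ^\<^sub>m l) * ((dft_mat D * H) * gfdm_mat K M g)"
    using C.carrier dft_mat_carrier Hc A by (simp add: assoc_mult_mat[of _ D D _ D _ D])
  then have "((transpose_mat (cyc_shift D ^\<^sub>m l) * dft_mat D) * (H * gfdm_mat K M g)) $$ (i, c)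
      = ((dft_mat D * H) * gfdm_mat K M g) $$ (q, c)"
    unfolding q_def using dft_mat_carrier Hc A i c
    by (simp only:) (rule C.mult_index, auto simp: D_def)
  also have "\<dots> = \<Lambda> q * (dft_mat D * gfdm_mat K M g) $$ (q, c)"
    using q cD by (rule \<Lambda>)
  also have "(dft_mat D * gfdm_mat K M g) $$ (q, c)
      = unit_root D ((int q - int (c mod K * M)) * int (c div K * K)) * (dft_mat D *\<^sub>v g) $ x"
    using dft_mat_mult_gfdm_index[OF K M g _ c] q by (simp add: x_def D_def)
  also have "(dft_mat D *\<^sub>v g) $ x = 0"
  proof (rule dft_prototype_eq_0)
    show "of_real (sqrt (real D)) \<cdot>\<^sub>v (dft_mat D *\<^sub>v g)
        = (cyc_shift D ^\<^sub>m l) *\<^sub>v (g1 @\<^sub>v 0\<^sub>v ((K - 1) * M))"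
      using hyp by (simp add: D_def)
    show "M + (K - 1) * M = D" using K by (simp add: D_def algebra_simps)
    have "int ((x + D - l) mod D) = (int i - int (c mod K * M)) mod int D"
      using mod_rotate_back[of l D i "int (c mod K * M)"] l by (simp add: x_def q_def of_nat_mod D_def)
    then show "M \<le> (x + D - l) mod D"
      using mod_diff_ge_if_div_neq[OF M i _ ne] K by (simp add: D_def)
  qed (use g1 x l in \<open>simp_all add: D_def\<close>)
  finally show ?thesis by (simp add: D_def)
qed

section \<open>Block-diagonal factorisation\<close>

lemma gfdm_receive_transform_unitary:
  assumes K: "K > 0" and R: "R > 0" and M: "M > 0" and l: "l < K * M"
  defines "U \<equiv> kron (perm_S K R) (1\<^sub>m M) * kron (1\<^sub>m R) (transpose_mat (cyc_shift (K * M) ^\<^sub>m l) * dft_mat (K * M))"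
  shows "U \<in> carrier_mat (R * (K * M)) (R * (K * M))" and "herm U * U = 1\<^sub>m (R * (K * M))"
proof -
  note S = perm_matrix_gfdm_row_perm[OF K R M]
  have V: "transpose_mat (cyc_shift (K * M) ^\<^sub>m l) * dft_mat (K * M) \<in> carrier_mat (K * M) (K * M)"
    by (rule mult_carrier_mat[OF _ dft_mat_carrier]) (simp add: cyc_shift_power_carrier)
  show "U \<in> carrier_mat (R * (K * M)) (R * (K * M))" "herm U * U = 1\<^sub>m (R * (K * M))"
    using perm_matrix.carrier[OF S] V perm_matrix.herm_mult_self[OF S] kron_one_unitary[OF V rotated_dft_unitary[OF l]]
    by (auto simp: U_def kron_def intro!: unitary_mult)
qed

lemma blkdiag_of_block_diagonal:
  assumes X: "X \<in> carrier_mat (K * a) (K * b)"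
    and off: "\<And>i j. i < K * a \<Longrightarrow> j < K * b \<Longrightarrow> i div a \<noteq> j div b \<Longrightarrow> X $$ (i, j) = 0"
  shows "X = blkdiag K a b (\<lambda>k. mat a b (\<lambda>(i, j). X $$ (k * a + i, k * b + j)))"
proof (rule eq_matI)
  fix i j assume "i < dim_row (blkdiag K a b (\<lambda>k. mat a b (\<lambda>(i, j). X $$ (k * a + i, k * b + j))))"
    "j < dim_col (blkdiag K a b (\<lambda>k. mat a b (\<lambda>(i, j). X $$ (k * a + i, k * b + j))))"
  then have ij: "i < K * a" "j < K * b" by (simp_all add: blkdiag_def)
  then have ab: "a > 0" "b > 0" by (cases a, simp_all, cases b, simp_all)
  show "X $$ (i, j) = blkdiag K a b (\<lambda>k. mat a b (\<lambda>(i, j). X $$ (k * a + i, k * b + j))) $$ (i, j)"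
  proof (cases "i div a = j div b")
    case True
    have "i div a * a + i mod a = i" "j div b * b + j mod b = j" by simp_all
    then show ?thesis using True ij ab by (simp add: blkdiag_def)
  next
    case False
    then show ?thesis using ij off by (simp add: blkdiag_def)
  qed
qed (use X in \<open>simp_all add: blkdiag_def\<close>)

lemma row_permutation_block_index:
  assumes M: "M > 0" and R: "R > 0" and i: "i < K * (M * R)"
  shows "(stride_perm R K (i div M) * M + i mod M) mod (K * M) div M = i div (M * R)"
proof -
  define b where "b = i div M"
  have "b < R * K" using i M by (simp add: b_def div_less_iff_less_mult algebra_simps)
  then have "b div R < K" using R by (simp add: div_less_iff_less_mult mult.commute)
  then have lt: "b div R * M + i mod M < K * M" using M by (simp add: mult_add_less_mult)
  have "stride_perm R K b * M + i mod M = b mod R * (K * M) + (b div R * M + i mod M)"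
    by (simp add: stride_perm_def algebra_simps)
  then have "(stride_perm R K b * M + i mod M) mod (K * M) = b div R * M + i mod M"
    by (simp only: mod_mult_self3 mod_less[OF lt])
  then have "(stride_perm R K b * M + i mod M) mod (K * M) div M = b div R"
    using M by simp
  also have "b div R = i div (M * R)" by (simp add: b_def div_mult2_eq)
  finally show ?thesis by (simp add: b_def)
qed

lemma column_permutation_block_index:
  assumes M: "M > 0" and T: "T > 0" and j: "j < K * (M * T)"
  defines "y \<equiv> stride_perm T K (j div M) * M + j mod M"
  shows "(y div (K * M) * (K * M) + stride_perm M K (y mod (K * M))) mod (K * M) mod K = j div (M * T)"
proof -
  define a where "a = j div M"
  have "a < T * K" using j M by (simp add: a_def div_less_iff_less_mult algebra_simps)
  then have aT: "a div T < K" using T by (simp add: div_less_iff_less_mult mult.commute)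
  then have lt: "a div T * M + j mod M < K * M" using M by (simp add: mult_add_less_mult)
  have "y = a mod T * (K * M) + (a div T * M + j mod M)"
    by (simp add: y_def a_def stride_perm_def algebra_simps)
  then have "y mod (K * M) = a div T * M + j mod M" using lt by simp
  then have z: "stride_perm M K (y mod (K * M)) = j mod M * K + a div T"
    using M by (simp add: stride_perm_def)
  have "stride_perm M K (y mod (K * M)) < K * M"
  proof -
    have "K * M > 0" using aT M by simp
    then show ?thesis using stride_perm_less[of M "y mod (K * M)" K] M by (simp add: mult.commute[of K])
  qed
  then have "(y div (K * M) * (K * M) + stride_perm M K (y mod (K * M))) mod (K * M) mod K = a div T"
    using aT by (simp add: z)
  also have "a div T = j div (M * T)" by (simp add: a_def div_mult2_eq)
  finally show ?thesis .
qed

lemma gfdm_channel_block_diagonal: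
  fixes K M R T l :: nat and g g1 :: "complex vec" and H :: "nat \<Rightarrow> nat \<Rightarrow> complex mat"
  defines "V \<equiv> transpose_mat (cyc_shift (K * M) ^\<^sub>m l) * dft_mat (K * M)"
  assumes K: "K > 0" and M: "M > 0" and R: "R > 0" and T: "T > 0"
    and g: "g \<in> carrier_vec (K * M)"
    and H: "\<And>r t. r < R \<Longrightarrow> t < T \<Longrightarrow> is_circulant (K * M) (H r t)"
    and g1: "g1 \<in> carrier_vec M" and l: "l < K * M"
    and hyp: "of_real (sqrt (real (K * M))) \<cdot>\<^sub>v (dft_mat (K * M) *\<^sub>v g)
           = (cyc_shift (K * M) ^\<^sub>m l) *\<^sub>v (g1 @\<^sub>v 0\<^sub>v ((K - 1) * M))"
    and i: "i < K * (M * R)" and j: "j < K * (M * T)" and ne: "i div (M * R) \<noteq> j div (M * T)"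
  shows "(kron (perm_S K R) (1\<^sub>m M) * kron (1\<^sub>m R) V * block_channel R T (K * M) H (gfdm_mat K M g)
          * transpose_mat (kron (perm_S K T) (1\<^sub>m M) * kron (1\<^sub>m T) (perm_S K M))) $$ (i, j) = 0"
proof -
  define D where "D = K * M"
  define a where "a = stride_perm R K (i div M) * M + i mod M"
  define y where "y = stride_perm T K (j div M) * M + j mod M"
  define b where "b = y div D * D + stride_perm M K (y mod D)"
  note S = perm_matrix_gfdm_row_perm[OF K R M, folded D_def]
    and P = perm_matrix_gfdm_col_perm[OF K T M, folded D_def]
  have V: "V \<in> carrier_mat D D"
    unfolding V_def D_def
    by (rule mult_carrier_mat[OF _ dft_mat_carrier]) (simp add: cyc_shift_power_carrier)
  have A: "gfdm_mat K M g \<in> carrier_mat D D" by (simp add: gfdm_mat_carrier D_def)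
  have Hc: "\<And>r t. r < R \<Longrightarrow> t < T \<Longrightarrow> H r t \<in> carrier_mat D D"
    using H by (simp add: is_circulant_def D_def)
  have KV: "kron (1\<^sub>m R) V \<in> carrier_mat (R * D) (R * D)" using V by (simp add: kron_def)
  have Ht: "block_channel R T D H (gfdm_mat K M g) \<in> carrier_mat (R * D) (T * D)"
    by (simp add: block_channel_def)
  have iR: "i < R * D" and jT: "j < T * D" using i j by (simp_all add: D_def ac_simps)
  have aR: "a < R * D" using perm_matrix.range(2)[OF S iR] by (simp add: a_def)
  have bT: "b < T * D" using perm_matrix.range(2)[OF P jT] by (simp add: b_def y_def)
  have "kron (perm_S K R) (1\<^sub>m M) * kron (1\<^sub>m R) V * block_channel R T D H (gfdm_mat K M g)
      = kron (perm_S K R) (1\<^sub>m M) * (kron (1\<^sub>m R) V * block_channel R T D H (gfdm_mat K M g))"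
    using assoc_mult_mat[OF perm_matrix.carrier[OF S] KV Ht] .
  then have "(kron (perm_S K R) (1\<^sub>m M) * kron (1\<^sub>m R) V * block_channel R T D H (gfdm_mat K M g)
        * transpose_mat (kron (perm_S K T) (1\<^sub>m M) * kron (1\<^sub>m T) (perm_S K M))) $$ (i, j)
      = (kron (1\<^sub>m R) V * block_channel R T D H (gfdm_mat K M g)) $$ (a, b)"
    using perm_matrix_sandwich_index[OF S P mult_carrier_mat[OF KV Ht] iR jT]
    by (simp add: a_def b_def y_def)
  also have "\<dots> = (V * (H (a div D) (b div D) * gfdm_mat K M g)) $$ (a mod D, b mod D)"
    using V A Hc aR bT by (rule kron_one_mult_block_channel)
  also have "\<dots> = 0"
    unfolding V_def D_def
  proof (rule rotated_dft_channel_gfdm_eq_0[OF K M g g1 l _ hyp])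
    have "a div D < R" "b div D < T"
      using aR bT K M by (simp_all add: D_def div_less_iff_less_mult)
    then show "is_circulant (K * M) (H (a div (K * M)) (b div (K * M)))" using H by (simp add: D_def)
    show "a mod (K * M) < K * M" "b mod (K * M) < K * M" using K M by simp_all
    have "a mod (K * M) div M = i div (M * R)"
      unfolding a_def by (rule row_permutation_block_index[OF M R i])
    moreover have "b mod (K * M) mod K = j div (M * T)"
      unfolding b_def y_def D_def by (rule column_permutation_block_index[OF M T j])
    ultimately show "a mod (K * M) div M \<noteq> b mod (K * M) mod K" using ne by simp
  qed
  finally show ?thesis by (simp add: D_def)
qed

theorem theorem1:
  fixes K M R T l :: nat
    and g g1 :: "complex vec"
    and H :: "nat \<Rightarrow> nat \<Rightarrow> complex mat"
  assumes "K > 0" "M > 0" "R > 0" "T > 0"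
    and "g \<in> carrier_vec (K*M)"
    and "\<And>r t. r < R \<Longrightarrow> t < T \<Longrightarrow> is_circulant (K*M) (H r t)"
    and "g1 \<in> carrier_vec M"
    and "l < K*M"
    and "of_real (sqrt (real (K*M))) \<cdot>\<^sub>v (dft_mat (K*M) *\<^sub>v g)
           = (cyc_shift (K*M) ^\<^sub>m l) *\<^sub>v (g1 @\<^sub>v 0\<^sub>v ((K-1)*M))"
  shows "\<exists>F :: nat \<Rightarrow> complex mat. (\<forall>k<K. F k \<in> carrier_mat (M*R) (M*T)) \<and>
     block_channel R T (K*M) H (gfdm_mat K M g)
       = herm ((kron (perm_S K R) (1\<^sub>m M)) *
               (kron (1\<^sub>m R) (transpose_mat (cyc_shift (K*M) ^\<^sub>m l) * dft_mat (K*M))))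
         * blkdiag K (M*R) (M*T) F
         * ((kron (perm_S K T) (1\<^sub>m M)) * (kron (1\<^sub>m T) (perm_S K M)))"
proof -
  define U where "U = kron (perm_S K R) (1\<^sub>m M)
      * kron (1\<^sub>m R) (transpose_mat (cyc_shift (K * M) ^\<^sub>m l) * dft_mat (K * M))"
  define P where "P = kron (perm_S K T) (1\<^sub>m M) * kron (1\<^sub>m T) (perm_S K M)"
  define Ht where "Ht = block_channel R T (K * M) H (gfdm_mat K M g)"
  define F where "F k = mat (M * R) (M * T) (\<lambda>(i, j). (U * Ht * transpose_mat P) $$ (k * (M * R) + i, k * (M * T) + j))"
    for k
  have U: "U \<in> carrier_mat (R * (K * M)) (R * (K * M))" "herm U * U = 1\<^sub>m (R * (K * M))"
    unfolding U_def using assms by (simp_all add: gfdm_receive_transform_unitary)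
  have P: "P \<in> carrier_mat (T * (K * M)) (T * (K * M))" "transpose_mat P * P = 1\<^sub>m (T * (K * M))"
    unfolding P_def using perm_matrix_gfdm_col_perm[of K T M] assms
    by (simp_all add: perm_matrix.carrier perm_matrix.transpose_mult_self)
  have Ht: "Ht \<in> carrier_mat (R * (K * M)) (T * (K * M))" by (simp add: Ht_def block_channel_def)
  have "U * Ht * transpose_mat P = blkdiag K (M * R) (M * T) F"
    unfolding F_def
  proof (rule blkdiag_of_block_diagonal)
    show "U * Ht * transpose_mat P \<in> carrier_mat (K * (M * R)) (K * (M * T))"
      using U P Ht by (simp add: ac_simps)
  qed (use assms in \<open>simp add: U_def Ht_def P_def gfdm_channel_block_diagonal\<close>)
  then have "Ht = herm U * blkdiag K (M * R) (M * T) F * P"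
    using unitary_sandwich[OF U(1) P(1) Ht U(2) P(2)] by simp
  moreover have "\<forall>k<K. F k \<in> carrier_mat (M * R) (M * T)" by (simp add: F_def)
  ultimately show ?thesis unfolding U_def P_def Ht_def by blast
qed

end
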